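(* Let $\kappa:=\sup_{x\in X}\sqrt{K(x,x)}<\infty$ and $|V|_0:=\sup_{y\in Y}V(y,0)<\infty$. Assume that for every $y\in Y$ the function $V(y,\cdot)$ is differentiable with derivative $V'(y,\cdot)$ Lipschitz with constant $L>0$, and that $0<\eta_t\le(L\kappa^2)^{-1}$ for all $t$. Then for every $t\ge1$, $\|f_{t+1}\|_K\le\sqrt{2|V|_0\sum_{k=1}^t\eta_k}$. In particular, if $\eta_t=\eta_1t^{-\theta}$ with $\theta\in[0,1)$ and $0<\eta_1\le\min\{\frac{1-\theta}{2|V|_0},(L\kappa^2)^{-1}\}$, then $\|f_{t+1}\|_K\le t^{\frac{1-\theta}{2}}$ for every $t\ge1$.
   Context: Setting. $X$ is a separable metric space, $Y\subseteq\mathbb{R}$, and $V:\mathbb{R}\times\mathbb{R}\to[0,\infty)$ is a measurable loss, convex in its second argument. A sample $\mathbf{z}=\{(x_i,y_i)\}_{i=1}^m\subset X\times Y$ is given, and $\mathcal{E}_{\mathbf z}(f)=\frac1m\sum_{i=1}^m V(y_i,f(x_i))$ is the empirical risk. $K:X\times X\to\mathbb{R}$ is a reproducing kernel with reproducing kernel Hilbert space $(\mathcal{H}_K,\|\cdot\|_K)$, $K_x=K(x,\cdot)$. Given step sizes $\eta_t>0$, the iterates are $f_1=0$ and $f_{t+1}=f_t-\eta_t\frac1m\sum_{j=1}^m V'(y_j,f_t(x_j))K_{x_j}$, $t\ge1$ (here $V'$ is the derivative in the second argument). *)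

theory Defs
  imports "HOL-Analysis.Analysis"
begin

definition reproducing_kernel :: "('x \<Rightarrow> 'x \<Rightarrow> real) \<Rightarrow> bool" where
  "reproducing_kernel K \<longleftrightarrow>
     (\<forall>x y. K x y = K y x) \<and>
     (\<forall>ps :: 'x list. \<forall>cs :: real list. length cs = length ps \<longrightarrow>
        0 \<le> (\<Sum>i<length ps. \<Sum>j<length ps. cs!i * cs!j * K (ps!i) (ps!j)))"

definition kernel_comb :: "('x \<Rightarrow> 'x \<Rightarrow> real) \<Rightarrow> 'x list \<Rightarrow> real list \<Rightarrow> 'x \<Rightarrow> real" where
  "kernel_comb K ps cs = (\<lambda>x. \<Sum>i<length ps. cs!i * K (ps!i) x)"

text \<open>RKHS norm of an element of span of kernel sections (the dense subspace of H_K):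
  the square root of c^T G c for a representation (independent of the representation).\<close>
definition rkhs_norm :: "('x \<Rightarrow> 'x \<Rightarrow> real) \<Rightarrow> ('x \<Rightarrow> real) \<Rightarrow> real" where
  "rkhs_norm K f = sqrt (Inf {(\<Sum>i<length ps. \<Sum>j<length ps. cs!i * cs!j * K (ps!i) (ps!j)) | ps cs.
       length cs = length ps \<and> f = kernel_comb K ps cs})"

text \<open>Gradient descent iterates; gd_aux n is f_{n+1}, so f_1 = 0.\<close>
primrec gd_aux :: "('x \<Rightarrow> 'x \<Rightarrow> real) \<Rightarrow> (real \<Rightarrow> real \<Rightarrow> real) \<Rightarrow> (nat \<Rightarrow> real)
    \<Rightarrow> nat \<Rightarrow> (nat \<Rightarrow> 'x) \<Rightarrow> (nat \<Rightarrow> real) \<Rightarrow> nat \<Rightarrow> 'x \<Rightarrow> real" where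
  "gd_aux K V' \<eta> m xs ys 0 = (\<lambda>x. 0)"
| "gd_aux K V' \<eta> m xs ys (Suc n) = (\<lambda>x. gd_aux K V' \<eta> m xs ys n x
     - \<eta> (Suc n) * (1 / real m) * (\<Sum>j<m. V' (ys j) (gd_aux K V' \<eta> m xs ys n (xs j)) * K (xs j) x))"

definition gd_iter :: "('x \<Rightarrow> 'x \<Rightarrow> real) \<Rightarrow> (real \<Rightarrow> real \<Rightarrow> real) \<Rightarrow> (nat \<Rightarrow> real)
    \<Rightarrow> nat \<Rightarrow> (nat \<Rightarrow> 'x) \<Rightarrow> (nat \<Rightarrow> real) \<Rightarrow> nat \<Rightarrow> 'x \<Rightarrow> real" where
  "gd_iter K V' \<eta> m xs ys t = gd_aux K V' \<eta> m xs ys (t - 1)"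

end

theory Submission
  imports Defs
begin

text \<open>
  Every iterate \<open>f\<^sub>t\<close> is a kernel combination over the sample, so \<open>||f\<^sub>t||\<^sup>2\<close> is a Gram
  quadratic form in its coefficients, and with \<open>g\<^sub>t\<close> the gradient of the empirical risk \<open>E\<close> at
  \<open>f\<^sub>t\<close> one step gives \<open>||f\<^sub>t\<^sub>+\<^sub>1||\<^sup>2 = ||f\<^sub>t||\<^sup>2 - 2\<eta>\<^sub>t <g\<^sub>t, f\<^sub>t> + \<eta>\<^sub>t\<^sup>2 ||g\<^sub>t||\<^sup>2\<close>.
  Convexity of \<open>V(y, \<cdot>)\<close> gives \<open><g\<^sub>t, f\<^sub>t> \<ge> E(f\<^sub>t) - |V|\<^sub>0\<close>. Along \<open>g\<^sub>t\<close> the risk is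
  \<open>L\<kappa>\<^sup>2\<close>-smooth, so the descent lemma and \<open>\<eta>\<^sub>t L\<kappa>\<^sup>2 \<le> 1\<close> give
  \<open>\<eta>\<^sub>t\<^sup>2 ||g\<^sub>t||\<^sup>2 \<le> 2\<eta>\<^sub>t (E(f\<^sub>t) - E(f\<^sub>t\<^sub>+\<^sub>1))\<close>. Hence
  \<open>||f\<^sub>t\<^sub>+\<^sub>1||\<^sup>2 \<le> ||f\<^sub>t||\<^sup>2 + 2\<eta>\<^sub>t (|V|\<^sub>0 - E(f\<^sub>t\<^sub>+\<^sub>1)) \<le> ||f\<^sub>t||\<^sup>2 + 2\<eta>\<^sub>t |V|\<^sub>0\<close>, and the
  first bound follows by telescoping. For \<open>\<eta>\<^sub>t = \<eta>\<^sub>1 t\<^sup>-\<^sup>\<theta>\<close> it remains to bound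
  \<open>\<Sum>\<^sub>k\<^sub>\<le>\<^sub>t k\<^sup>-\<^sup>\<theta> \<le> t\<^sup>1\<^sup>-\<^sup>\<theta> / (1 - \<theta>)\<close>.
\<close>

lemma nonneg_quadratic_discriminant:
  fixes a b c :: real
  assumes nonneg: "\<And>s. 0 \<le> a + 2 * s * b + s\<^sup>2 * c" and "0 \<le> c"
  shows "b\<^sup>2 \<le> a * c"
proof (cases "c = 0")
  case True
  show ?thesis
  proof (rule ccontr)
    assume "\<not> ?thesis"
    then have "b \<noteq> 0" using True by simp
    have "0 \<le> a + 2 * (- (a + 1) / (2 * b)) * b" using nonneg[of "- (a + 1) / (2 * b)"] True by simp
    also have "\<dots> = -1" using \<open>b \<noteq> 0\<close> by (simp add: field_simps)
    finally show False by simp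
  qed
next
  case False
  then have "c > 0" using assms by simp
  have "0 \<le> a + 2 * (- b / c) * b + (- b / c)\<^sup>2 * c" using nonneg .
  also have "\<dots> = a - b\<^sup>2 / c" using \<open>c > 0\<close> by (simp add: field_simps power2_eq_square)
  finally show ?thesis using \<open>c > 0\<close> by (simp add: field_simps)
qed

lemma lipschitz_deriv_quadratic_upper_bound:
  fixes \<phi> \<phi>' :: "real \<Rightarrow> real"
  assumes deriv: "\<And>u. (\<phi> has_real_derivative \<phi>' u) (at u)"
    and lipschitz: "\<And>u v. \<bar>\<phi>' u - \<phi>' v\<bar> \<le> L * \<bar>u - v\<bar>"
  shows "\<phi> b \<le> \<phi> a + \<phi>' a * (b - a) + L / 2 * (b - a)\<^sup>2"
proof -
  define h where "h s = \<phi> (a + s * (b - a)) - s * \<phi>' a * (b - a) - L / 2 * s\<^sup>2 * (b - a)\<^sup>2" for s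
  define h' where "h' s = \<phi>' (a + s * (b - a)) * (b - a) - \<phi>' a * (b - a) - L * s * (b - a)\<^sup>2" for s
  have "(h has_real_derivative h' s) (at s)" for s
  proof -
    have "((\<lambda>s. \<phi> (a + s * (b - a))) has_real_derivative \<phi>' (a + s * (b - a)) * (b - a)) (at s)"
      by (rule DERIV_chain2[OF deriv]) (auto intro!: derivative_eq_intros)
    then show ?thesis unfolding h_def h'_def
      by (auto intro!: derivative_eq_intros simp: power2_eq_square)
  qed
  then obtain z where z: "0 < z" "z < 1" "h 1 - h 0 = (1 - 0) * h' z"
    using MVT2[of 0 1 h h'] by auto
  have "(\<phi>' (a + z * (b - a)) - \<phi>' a) * (b - a) \<le> \<bar>\<phi>' (a + z * (b - a)) - \<phi>' a\<bar> * \<bar>b - a\<bar>"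
    by (metis abs_ge_self abs_mult)
  also have "\<dots> \<le> L * \<bar>z * (b - a)\<bar> * \<bar>b - a\<bar>"
    using lipschitz[of "a + z * (b - a)" a] by (simp add: mult_right_mono)
  also have "\<dots> = L * z * (b - a)\<^sup>2" using z by (simp add: abs_mult power2_eq_square)
  finally have "h' z \<le> 0" unfolding h'_def by (simp add: algebra_simps)
  then have "h 1 \<le> h 0" using z by simp
  then show ?thesis unfolding h_def by (simp add: algebra_simps)
qed

lemma sum_powr_neg_le:
  fixes \<theta> :: real
  assumes "0 \<le> \<theta>" "\<theta> < 1"
  shows "(\<Sum>k=1..t. real k powr - \<theta>) \<le> real t powr (1 - \<theta>) / (1 - \<theta>)"
proof (induction t)
  case 0
  then show ?case by simp
next
  case (Suc t)
  have increment: "(1 - \<theta>) * real (Suc t) powr - \<theta> \<le> real (Suc t) powr (1 - \<theta>) - real t powr (1 - \<theta>)"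
  proof (cases "t = 0")
    case True
    then show ?thesis using assms by simp
  next
    case False
    have "((\<lambda>z. z powr (1 - \<theta>)) has_real_derivative (1 - \<theta>) * z powr (1 - \<theta> - 1)) (at z)"
      if "real t \<le> z" "z \<le> real (Suc t)" for z
      using False that by (intro has_real_derivative_powr) auto
    from MVT2[of "real t" "real (Suc t)" "\<lambda>z. z powr (1 - \<theta>)", OF _ this] obtain z where z: "real t < z" "z < real (Suc t)"
      "real (Suc t) powr (1 - \<theta>) - real t powr (1 - \<theta>) = (real (Suc t) - real t) * ((1 - \<theta>) * z powr (1 - \<theta> - 1))"
      by auto
    have "real (Suc t) powr - \<theta> \<le> z powr - \<theta>"
      using z False assms by (intro powr_mono2') auto
    then show ?thesis using z assms by (simp add: mult_left_mono)
  qed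
  have "(\<Sum>k=1..Suc t. real k powr - \<theta>) \<le> real t powr (1 - \<theta>) / (1 - \<theta>) + real (Suc t) powr - \<theta>"
    using Suc by simp
  also have "\<dots> \<le> real t powr (1 - \<theta>) / (1 - \<theta>) + (real (Suc t) powr (1 - \<theta>) - real t powr (1 - \<theta>)) / (1 - \<theta>)"
    using increment assms by (simp add: pos_le_divide_eq mult.commute)
  also have "\<dots> = real (Suc t) powr (1 - \<theta>) / (1 - \<theta>)"
    by (simp add: diff_divide_distrib)
  finally show ?case .
qed

definition gram_form :: "('x \<Rightarrow> 'x \<Rightarrow> real) \<Rightarrow> (nat \<Rightarrow> 'x) \<Rightarrow> nat \<Rightarrow> (nat \<Rightarrow> real) \<Rightarrow> (nat \<Rightarrow> real) \<Rightarrow> real"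
  where "gram_form K xs m a b = (\<Sum>i<m. \<Sum>k<m. a i * b k * K (xs i) (xs k))"

lemma reproducing_kernel_symmetric: "reproducing_kernel K \<Longrightarrow> K x y = K y x"
  unfolding reproducing_kernel_def by blast

lemma reproducing_kernel_nonneg:
  "reproducing_kernel K \<Longrightarrow> length cs = length ps
    \<Longrightarrow> 0 \<le> (\<Sum>i<length ps. \<Sum>j<length ps. cs!i * cs!j * K (ps!i) (ps!j))"
  unfolding reproducing_kernel_def by blast

lemma reproducing_kernel_diag_le_SUP:
  assumes K: "reproducing_kernel K" and bdd: "bdd_above (range (\<lambda>x. sqrt (K x x)))"
  shows "K x x \<le> (SUP x. sqrt (K x x))\<^sup>2"
proof -
  have diag_nonneg: "0 \<le> K x x"
    using reproducing_kernel_nonneg[OF K, of "[1]" "[x]"] by simp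
  have "sqrt (K x x) \<le> (SUP x. sqrt (K x x))"
    by (rule cSUP_upper[OF _ bdd]) simp
  then have "(sqrt (K x x))\<^sup>2 \<le> (SUP x. sqrt (K x x))\<^sup>2"
    using diag_nonneg by (intro power_mono) auto
  then show ?thesis using diag_nonneg by simp
qed

lemma gram_form_commute:
  "reproducing_kernel K \<Longrightarrow> gram_form K xs m a b = gram_form K xs m b a"
  unfolding gram_form_def
  by (subst sum.swap) (simp add: mult_ac reproducing_kernel_symmetric[of K])

lemma gram_form_altdef: "gram_form K xs m a b = (\<Sum>k<m. b k * (\<Sum>i<m. a i * K (xs i) (xs k)))"
  unfolding gram_form_def by (subst sum.swap) (simp add: sum_distrib_left mult_ac)

lemma gram_form_add_scaled:
  assumes "reproducing_kernel K"
  shows "gram_form K xs m (\<lambda>i. a i + s * b i) (\<lambda>i. a i + s * b i)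
     = gram_form K xs m a a + 2 * s * gram_form K xs m a b + s\<^sup>2 * gram_form K xs m b b"
proof -
  have "gram_form K xs m (\<lambda>i. a i + s * b i) (\<lambda>i. a i + s * b i)
     = gram_form K xs m a a + s * gram_form K xs m a b + s * gram_form K xs m b a + s\<^sup>2 * gram_form K xs m b b"
    unfolding gram_form_def by (simp add: algebra_simps sum.distrib sum_distrib_left power2_eq_square)
  then show ?thesis using gram_form_commute[OF assms, of xs m b a] by simp
qed

lemma gram_form_nonneg:
  assumes "reproducing_kernel K"
  shows "0 \<le> gram_form K xs m c c"
proof -
  let ?ps = "map xs [0..<m]" and ?cs = "map c [0..<m]"
  have "0 \<le> (\<Sum>i<length ?ps. \<Sum>j<length ?ps. ?cs!i * ?cs!j * K (?ps!i) (?ps!j))"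
    using reproducing_kernel_nonneg[OF assms, of ?cs ?ps] by simp
  also have "\<dots> = gram_form K xs m c c"
    unfolding gram_form_def by (intro sum.cong refl) auto
  finally show ?thesis .
qed

lemma gram_form_Cauchy_Schwarz:
  assumes K: "reproducing_kernel K" and "j < m"
  shows "(\<Sum>i<m. g i * K (xs i) (xs j))\<^sup>2 \<le> gram_form K xs m g g * K (xs j) (xs j)"
proof -
  define e :: "nat \<Rightarrow> real" where "e i = of_bool (i = j)" for i
  have ge: "gram_form K xs m g e = (\<Sum>i<m. g i * K (xs i) (xs j))"
    unfolding gram_form_altdef e_def using \<open>j < m\<close> by simp
  have ee: "gram_form K xs m e e = K (xs j) (xs j)"
    unfolding gram_form_altdef e_def using \<open>j < m\<close> by simp
  have "0 \<le> gram_form K xs m g g + 2 * s * gram_form K xs m g e + s\<^sup>2 * gram_form K xs m e e" for s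
    using gram_form_nonneg[OF K, of xs m "\<lambda>i. g i + s * e i"] unfolding gram_form_add_scaled[OF K] .
  then have "(gram_form K xs m g e)\<^sup>2 \<le> gram_form K xs m g g * gram_form K xs m e e"
    using gram_form_nonneg[OF K] by (rule nonneg_quadratic_discriminant)
  then show ?thesis using ge ee by simp
qed

lemma kernel_quadratic_form_eq_sum:
  assumes "reproducing_kernel K"
  shows "(\<Sum>i<length ps. \<Sum>j<length ps. cs!i * cs!j * K (ps!i) (ps!j))
       = (\<Sum>i<length ps. cs!i * kernel_comb K ps cs (ps!i))"
  unfolding kernel_comb_def sum_distrib_left
  by (intro sum.cong refl) (metis reproducing_kernel_symmetric[OF assms] mult.assoc)

lemma rkhs_norm_sample_comb:
  assumes K: "reproducing_kernel K"
  shows "rkhs_norm K (\<lambda>x. \<Sum>i<m. c i * K (xs i) x) = sqrt (gram_form K xs m c c)"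
proof -
  define f where "f x = (\<Sum>i<m. c i * K (xs i) x)" for x
  let ?S = "{(\<Sum>i<length ps. \<Sum>j<length ps. cs!i * cs!j * K (ps!i) (ps!j)) | ps cs.
       length cs = length ps \<and> f = kernel_comb K ps cs}"
  \<comment> \<open>every representation of \<open>f\<close> gives the same value \<open>\<Sum>\<^sub>k c\<^sub>k f(x\<^sub>k)\<close>\<close>
  have "v = gram_form K xs m c c" if "v \<in> ?S" for v
  proof -
    obtain ps cs where v: "v = (\<Sum>i<length ps. \<Sum>j<length ps. cs!i * cs!j * K (ps!i) (ps!j))"
      and f: "f = kernel_comb K ps cs" using \<open>v \<in> ?S\<close> by blast
    have "v = (\<Sum>i<length ps. cs!i * f (ps!i))" using v f kernel_quadratic_form_eq_sum[OF K] by simp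
    also have "\<dots> = (\<Sum>k<m. \<Sum>i<length ps. c k * (cs!i * K (ps!i) (xs k)))"
      unfolding f_def sum_distrib_left
      by (subst sum.swap) (intro sum.cong refl, metis reproducing_kernel_symmetric[OF K] mult.left_commute)
    also have "\<dots> = (\<Sum>k<m. c k * f (xs k))"
      unfolding f kernel_comb_def by (simp add: sum_distrib_left)
    also have "\<dots> = gram_form K xs m c c"
      unfolding gram_form_altdef f_def by simp
    finally show ?thesis .
  qed
  moreover have "gram_form K xs m c c \<in> ?S"
  proof -
    have "f = kernel_comb K (map xs [0..<m]) (map c [0..<m])"
      unfolding kernel_comb_def f_def by (intro ext sum.cong) auto
    moreover have "gram_form K xs m c c = (\<Sum>i<length (map xs [0..<m]). \<Sum>j<length (map xs [0..<m]).
        (map c [0..<m])!i * (map c [0..<m])!j * K ((map xs [0..<m])!i) ((map xs [0..<m])!j))"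
      unfolding gram_form_def by (intro sum.cong refl) auto
    ultimately show ?thesis by (intro CollectI exI[of _ "map xs [0..<m]"] exI[of _ "map c [0..<m]"]) simp
  qed
  ultimately have "?S = {gram_form K xs m c c}" by blast
  then show ?thesis unfolding rkhs_norm_def f_def by simp
qed

locale kernel_gradient_descent =
  fixes K :: "'x \<Rightarrow> 'x \<Rightarrow> real" and V V' :: "real \<Rightarrow> real \<Rightarrow> real" and Y :: "real set"
    and m :: nat and xs :: "nat \<Rightarrow> 'x" and ys :: "nat \<Rightarrow> real" and L \<kappa> V0 :: real
  assumes kernel: "reproducing_kernel K"
    and kernel_diag_bound: "\<And>i. i < m \<Longrightarrow> K (xs i) (xs i) \<le> \<kappa>\<^sup>2"
    and m_pos: "0 < m"
    and sample_Y: "\<And>i. i < m \<Longrightarrow> ys i \<in> Y"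
    and V_nonneg: "\<And>y u. y \<in> Y \<Longrightarrow> 0 \<le> V y u"
    and V_convex: "\<And>y. y \<in> Y \<Longrightarrow> convex_on UNIV (V y)"
    and V_zero_bound: "\<And>y. y \<in> Y \<Longrightarrow> V y 0 \<le> V0"
    and V_deriv: "\<And>y u. y \<in> Y \<Longrightarrow> (V y has_real_derivative V' y u) (at u)"
    and V'_lipschitz: "\<And>y u v. y \<in> Y \<Longrightarrow> \<bar>V' y u - V' y v\<bar> \<le> L * \<bar>u - v\<bar>"
    and L_nonneg: "0 \<le> L"
begin

abbreviation gram :: "(nat \<Rightarrow> real) \<Rightarrow> (nat \<Rightarrow> real) \<Rightarrow> real"
  where "gram \<equiv> gram_form K xs m"

definition sample_comb :: "(nat \<Rightarrow> real) \<Rightarrow> 'x \<Rightarrow> real"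
  where "sample_comb a x = (\<Sum>i<m. a i * K (xs i) x)"

definition emp_risk :: "('x \<Rightarrow> real) \<Rightarrow> real"
  where "emp_risk f = (\<Sum>j<m. V (ys j) (f (xs j))) / real m"

text \<open>The gradient of \<open>emp_risk\<close> at \<open>f\<close> in \<open>\<H>\<^sub>K\<close> is \<open>sample_comb (grad_coef f)\<close>.\<close>

definition grad_coef :: "('x \<Rightarrow> real) \<Rightarrow> nat \<Rightarrow> real"
  where "grad_coef f i = V' (ys i) (f (xs i)) / real m"

lemma sample_comb_diff_scaled:
  "sample_comb (\<lambda>i. a i - e * b i) x = sample_comb a x - e * sample_comb b x"
  unfolding sample_comb_def by (simp add: algebra_simps sum_subtractf sum_distrib_left)

lemma emp_risk_nonneg: "0 \<le> emp_risk f"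
  unfolding emp_risk_def by (intro divide_nonneg_nonneg sum_nonneg) (auto simp: V_nonneg sample_Y)

lemma emp_risk_minus_V0_le_gram_grad:
  fixes a :: "nat \<Rightarrow> real"
  defines "f \<equiv> sample_comb a"
  shows "emp_risk f - V0 \<le> gram a (grad_coef f)"
proof -
  have tangent: "(V (ys k) (f (xs k)) - V (ys k) 0) / real m \<le> grad_coef f k * f (xs k)"
    if "k < m" for k
  proof -
    have "V' (ys k) (f (xs k)) * (0 - f (xs k)) \<le> V (ys k) 0 - V (ys k) (f (xs k))"
      using convex_on_imp_above_tangent[of UNIV "V (ys k)" "f (xs k)" 0]
        V_convex V_deriv sample_Y \<open>k < m\<close> by auto
    then show ?thesis unfolding grad_coef_def by (simp add: divide_right_mono algebra_simps)
  qed
  have "(\<Sum>k<m. V (ys k) 0) / real m \<le> V0"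
    using sum_bounded_above[of "{..<m}" "\<lambda>k. V (ys k) 0" V0] V_zero_bound sample_Y m_pos
    by (simp add: divide_le_eq mult.commute)
  then have "emp_risk f - V0 \<le> (\<Sum>k<m. (V (ys k) (f (xs k)) - V (ys k) 0) / real m)"
    unfolding emp_risk_def by (simp add: sum_subtractf diff_divide_distrib sum_divide_distrib[symmetric])
  also have "\<dots> \<le> (\<Sum>k<m. grad_coef f k * f (xs k))"
    using tangent by (intro sum_mono) auto
  also have "\<dots> = gram a (grad_coef f)"
    unfolding gram_form_altdef f_def sample_comb_def ..
  finally show ?thesis .
qed

lemma emp_risk_gradient_step:
  fixes a :: "nat \<Rightarrow> real"
  defines "f \<equiv> sample_comb a" and "g \<equiv> grad_coef (sample_comb a)"
  shows "emp_risk (sample_comb (\<lambda>i. a i - e * g i))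
    \<le> emp_risk f - e * gram g g + L / 2 * e\<^sup>2 * \<kappa>\<^sup>2 * gram g g"
proof -
  define d where "d = sample_comb g"
  have descent: "V (ys j) (f (xs j) - e * d (xs j))
      \<le> V (ys j) (f (xs j)) - e * V' (ys j) (f (xs j)) * d (xs j) + L / 2 * e\<^sup>2 * (d (xs j))\<^sup>2"
    if "j < m" for j
    using lipschitz_deriv_quadratic_upper_bound[of "V (ys j)" "V' (ys j)" L "f (xs j) - e * d (xs j)" "f (xs j)"]
      V_deriv[OF sample_Y[OF that]] V'_lipschitz[OF sample_Y[OF that]]
    by (simp add: algebra_simps power_mult_distrib)
  have d_bound: "(d (xs j))\<^sup>2 \<le> \<kappa>\<^sup>2 * gram g g" if "j < m" for j
  proof -
    have "(d (xs j))\<^sup>2 \<le> gram g g * K (xs j) (xs j)"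
      unfolding d_def sample_comb_def by (rule gram_form_Cauchy_Schwarz[OF kernel that])
    also have "\<dots> \<le> gram g g * \<kappa>\<^sup>2"
      by (intro mult_left_mono kernel_diag_bound that gram_form_nonneg[OF kernel])
    finally show ?thesis by (simp add: mult.commute)
  qed
  have "emp_risk (sample_comb (\<lambda>i. a i - e * g i))
      \<le> (\<Sum>j<m. V (ys j) (f (xs j)) - e * V' (ys j) (f (xs j)) * d (xs j) + L / 2 * e\<^sup>2 * (d (xs j))\<^sup>2) / real m"
    unfolding emp_risk_def sample_comb_diff_scaled f_def[symmetric] d_def[symmetric]
    using descent by (intro divide_right_mono sum_mono) auto
  also have "\<dots> = emp_risk f - e * (\<Sum>j<m. g j * d (xs j)) + L / 2 * e\<^sup>2 * ((\<Sum>j<m. (d (xs j))\<^sup>2) / real m)"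
    unfolding emp_risk_def g_def grad_coef_def f_def
    by (simp add: sum.distrib sum_subtractf sum_distrib_left sum_divide_distrib add_divide_distrib
        diff_divide_distrib mult_ac)
  also have "(\<Sum>j<m. g j * d (xs j)) = gram g g"
    unfolding gram_form_altdef d_def sample_comb_def by (simp add: mult.commute)
  also have "(\<Sum>j<m. (d (xs j))\<^sup>2) / real m \<le> \<kappa>\<^sup>2 * gram g g"
    using sum_bounded_above[of "{..<m}" "\<lambda>j. (d (xs j))\<^sup>2" "\<kappa>\<^sup>2 * gram g g"] d_bound m_pos
    by (simp add: divide_le_eq mult.commute)
  then have "L / 2 * e\<^sup>2 * ((\<Sum>j<m. (d (xs j))\<^sup>2) / real m) \<le> L / 2 * e\<^sup>2 * (\<kappa>\<^sup>2 * gram g g)"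
    using L_nonneg by (intro mult_left_mono) auto
  finally show ?thesis by (simp add: mult.assoc)
qed

lemma gram_gradient_step_le:
  fixes a :: "nat \<Rightarrow> real"
  defines "g \<equiv> grad_coef (sample_comb a)"
  assumes "0 < e" and "e * (L * \<kappa>\<^sup>2) \<le> 1"
  shows "gram (\<lambda>i. a i - e * g i) (\<lambda>i. a i - e * g i) \<le> gram a a + 2 * e * V0"
proof -
  define f where "f = sample_comb a"
  define f' where "f' = sample_comb (\<lambda>i. a i - e * g i)"
  define Q where "Q = gram g g"
  have expand: "gram (\<lambda>i. a i - e * g i) (\<lambda>i. a i - e * g i) = gram a a - 2 * e * gram a g + e\<^sup>2 * Q"
    using gram_form_add_scaled[OF kernel, of xs m a "- e" g] unfolding Q_def by simp
  have "e * (emp_risk f - V0) \<le> e * gram a g"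
    using emp_risk_minus_V0_le_gram_grad[of a] \<open>0 < e\<close> unfolding f_def g_def by simp
  moreover have "e\<^sup>2 * Q \<le> 2 * e * (emp_risk f - emp_risk f')"
  proof -
    have "e * (L * \<kappa>\<^sup>2) * (e * Q) \<le> e * Q"
      using assms L_nonneg gram_form_nonneg[OF kernel] unfolding Q_def
      by (intro mult_left_le_one_le) auto
    then have "L / 2 * e\<^sup>2 * \<kappa>\<^sup>2 * Q \<le> e * Q / 2"
      by (simp add: power2_eq_square mult_ac)
    moreover have "emp_risk f' \<le> emp_risk f - e * Q + L / 2 * e\<^sup>2 * \<kappa>\<^sup>2 * Q"
      using emp_risk_gradient_step[of a e] unfolding f_def f'_def g_def Q_def .
    ultimately have "e * Q \<le> 2 * (emp_risk f - emp_risk f')" by argo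
    then show ?thesis
      using mult_left_mono[of "e * Q" _ e] \<open>0 < e\<close> by (simp add: power2_eq_square mult_ac)
  qed
  moreover have "0 \<le> e * emp_risk f'"
    using \<open>0 < e\<close> emp_risk_nonneg by simp
  ultimately show ?thesis unfolding expand by (simp add: algebra_simps)
qed

primrec gd_coef :: "(nat \<Rightarrow> real) \<Rightarrow> nat \<Rightarrow> nat \<Rightarrow> real" where
  "gd_coef \<eta> 0 = (\<lambda>i. 0)"
| "gd_coef \<eta> (Suc n) = (\<lambda>i. gd_coef \<eta> n i - \<eta> (Suc n) * grad_coef (sample_comb (gd_coef \<eta> n)) i)"

lemma gd_aux_eq_sample_comb: "gd_aux K V' \<eta> m xs ys n = sample_comb (gd_coef \<eta> n)"
proof (induction n)
  case 0
  then show ?case by (simp add: sample_comb_def fun_eq_iff)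
next
  case (Suc n)
  then show ?case
    by (simp add: fun_eq_iff sample_comb_diff_scaled)
      (simp add: sample_comb_def grad_coef_def sum_distrib_left sum_divide_distrib mult_ac)
qed

lemma gram_gd_coef_le:
  assumes "\<forall>t\<ge>1. 0 < \<eta> t \<and> \<eta> t * (L * \<kappa>\<^sup>2) \<le> 1"
  shows "gram (gd_coef \<eta> n) (gd_coef \<eta> n) \<le> 2 * V0 * (\<Sum>k=1..n. \<eta> k)"
proof (induction n)
  case 0
  then show ?case by (simp add: gram_form_def)
next
  case (Suc n)
  have "gram (gd_coef \<eta> (Suc n)) (gd_coef \<eta> (Suc n)) \<le> gram (gd_coef \<eta> n) (gd_coef \<eta> n) + 2 * \<eta> (Suc n) * V0"
    using gram_gradient_step_le assms by simp
  also have "\<dots> \<le> 2 * V0 * (\<Sum>k=1..Suc n. \<eta> k)"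
    using Suc by (simp add: algebra_simps)
  finally show ?case .
qed

lemma rkhs_norm_gd_iter_le:
  assumes "\<forall>t\<ge>1. 0 < \<eta> t \<and> \<eta> t * (L * \<kappa>\<^sup>2) \<le> 1"
  shows "rkhs_norm K (gd_iter K V' \<eta> m xs ys (t + 1)) \<le> sqrt (2 * V0 * (\<Sum>k=1..t. \<eta> k))"
  using gram_gd_coef_le[OF assms, of t]
  by (simp add: gd_iter_def gd_aux_eq_sample_comb sample_comb_def[abs_def] rkhs_norm_sample_comb[OF kernel])

lemma rkhs_norm_gd_iter_polynomial_steps:
  assumes "0 \<le> \<theta>" "\<theta> < 1" "0 < \<eta>\<^sub>1" "\<eta>\<^sub>1 * (2 * V0) \<le> 1 - \<theta>" "\<eta>\<^sub>1 * (L * \<kappa>\<^sup>2) \<le> 1" "1 \<le> t"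
  shows "rkhs_norm K (gd_iter K V' (\<lambda>k. \<eta>\<^sub>1 * real k powr - \<theta>) m xs ys (t + 1)) \<le> real t powr ((1 - \<theta>) / 2)"
proof -
  have "\<forall>k\<ge>1. 0 < \<eta>\<^sub>1 * real k powr - \<theta> \<and> \<eta>\<^sub>1 * real k powr - \<theta> * (L * \<kappa>\<^sup>2) \<le> 1"
  proof (intro allI impI conjI)
    fix k :: nat
    assume "1 \<le> k"
    then show "0 < \<eta>\<^sub>1 * real k powr - \<theta>" using assms by simp
    have "real k powr - \<theta> \<le> 1" using powr_mono2'[of "- \<theta>" 1 "real k"] \<open>1 \<le> k\<close> assms by simp
    then have "\<eta>\<^sub>1 * real k powr - \<theta> * (L * \<kappa>\<^sup>2) \<le> \<eta>\<^sub>1 * (L * \<kappa>\<^sup>2)"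
      using assms L_nonneg by (intro mult_right_mono mult_left_le) auto
    then show "\<eta>\<^sub>1 * real k powr - \<theta> * (L * \<kappa>\<^sup>2) \<le> 1" using assms by linarith
  qed
  then have "rkhs_norm K (gd_iter K V' (\<lambda>k. \<eta>\<^sub>1 * real k powr - \<theta>) m xs ys (t + 1))
      \<le> sqrt (2 * V0 * (\<Sum>k=1..t. \<eta>\<^sub>1 * real k powr - \<theta>))"
    by (rule rkhs_norm_gd_iter_le)
  also have "\<dots> = sqrt (\<eta>\<^sub>1 * (2 * V0) * (\<Sum>k=1..t. real k powr - \<theta>))"
    by (simp add: sum_distrib_left mult_ac)
  also have "\<dots> \<le> sqrt ((1 - \<theta>) * (real t powr (1 - \<theta>) / (1 - \<theta>)))"
    using assms sum_powr_neg_le[of \<theta> t] by (intro real_sqrt_le_mono mult_mono sum_nonneg) auto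
  also have "\<dots> = real t powr ((1 - \<theta>) / 2)"
    using assms by (simp add: powr_half_sqrt_powr)
  finally show ?thesis .
qed

end

theorem mainTheorem15:
  fixes K :: "'x::metric_space \<Rightarrow> 'x \<Rightarrow> real"
    and V V' :: "real \<Rightarrow> real \<Rightarrow> real"
    and Y :: "real set"
    and m :: nat and xs :: "nat \<Rightarrow> 'x" and ys :: "nat \<Rightarrow> real"
    and L \<kappa> V0 :: real
  assumes separable: "\<exists>D::'x set. countable D \<and> closure D = UNIV"
    and V_meas: "(\<lambda>(a, b). V a b) \<in> borel_measurable borel"
    and V_nonneg: "\<And>a b. 0 \<le> V a b"
    and V_convex: "\<And>y. convex_on UNIV (V y)"
    and K_kernel: "reproducing_kernel K"
    and m_pos: "0 < m"
    and sample_Y: "\<And>i. i < m \<Longrightarrow> ys i \<in> Y"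
    and kappa_bdd: "bdd_above (range (\<lambda>x. sqrt (K x x)))"
    and kappa_def: "\<kappa> = (SUP x. sqrt (K x x))"
    and V0_bdd: "bdd_above ((\<lambda>y. V y 0) ` Y)"
    and V0_def: "V0 = (SUP y\<in>Y. V y 0)"
    and V_deriv: "\<And>y u. y \<in> Y \<Longrightarrow> (V y has_real_derivative V' y u) (at u)"
    and L_pos: "0 < L"
    and V'_lip: "\<And>y u v. y \<in> Y \<Longrightarrow> \<bar>V' y u - V' y v\<bar> \<le> L * \<bar>u - v\<bar>"
  shows
    "(\<forall>\<eta> :: nat \<Rightarrow> real.
        (\<forall>t\<ge>1. 0 < \<eta> t \<and> \<eta> t * (L * \<kappa>\<^sup>2) \<le> 1) \<longrightarrow>
        (\<forall>t\<ge>1. rkhs_norm K (gd_iter K V' \<eta> m xs ys (t + 1))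
                 \<le> sqrt (2 * V0 * (\<Sum>k=1..t. \<eta> k))))
     \<and>
     (\<forall>(\<theta>::real) (\<eta>1::real).
        0 \<le> \<theta> \<and> \<theta> < 1 \<and> 0 < \<eta>1 \<and> \<eta>1 * (2 * V0) \<le> 1 - \<theta> \<and> \<eta>1 * (L * \<kappa>\<^sup>2) \<le> 1 \<longrightarrow>
        (\<forall>t\<ge>1. rkhs_norm K (gd_iter K V' (\<lambda>k. \<eta>1 * real k powr (- \<theta>)) m xs ys (t + 1))
                 \<le> real t powr ((1 - \<theta>) / 2)))"
proof -
  interpret kernel_gradient_descent K V V' Y m xs ys L \<kappa> V0
  proof
    show "K (xs i) (xs i) \<le> \<kappa>\<^sup>2" for i
      unfolding kappa_def by (rule reproducing_kernel_diag_le_SUP[OF K_kernel kappa_bdd])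
    show "V y 0 \<le> V0" if "y \<in> Y" for y
      unfolding V0_def by (rule cSUP_upper[OF that V0_bdd])
  qed (use K_kernel m_pos sample_Y V_nonneg V_convex V_deriv V'_lip L_pos in auto)
  show ?thesis
    using rkhs_norm_gd_iter_le rkhs_norm_gd_iter_polynomial_steps by blast
qed

end
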